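(* Let $\mathcal{A}=\mathcal{R}*_K\mathcal{S}*_L\mathcal{T}\in\mathbb{C}^{I_1\times\cdots\times I_N\times J_1\times\cdots\times J_M}$, where $\mathcal{R}\in\mathbb{C}^{I_1\times\cdots\times I_N\times H_1\times\cdots\times H_K}$, $\mathcal{S}\in\mathbb{C}^{H_1\times\cdots\times H_K\times G_1\times\cdots\times G_L}$ and $\mathcal{T}\in\mathbb{C}^{G_1\times\cdots\times G_L\times J_1\times\cdots\times J_M}$, and write $\mathcal{Z}=\mathcal{T}^{\dagger}*_L\mathcal{S}^{\dagger}*_K\mathcal{R}^{\dagger}$. Then $\mathcal{A}^{\dagger}=\mathcal{Z}$ if and only if all of the following hold: (i) $\mathcal{R}^{\dagger}*_N\mathcal{A}*_M\mathcal{Z}*_N\mathcal{A}*_M\mathcal{T}^{\dagger}=\mathcal{R}^{\dagger}*_N\mathcal{A}*_M\mathcal{T}^{\dagger}$; (ii) $\mathcal{T}*_M\mathcal{Z}*_N\mathcal{A}*_M\mathcal{Z}*_N\mathcal{R}=\mathcal{T}*_M\mathcal{Z}*_N\mathcal{R}$; (iii) $[\mathcal{R}^H*_N\mathcal{A}*_M\mathcal{Z}*_N\mathcal{R}]^H=\mathcal{R}^H*_N\mathcal{A}*_M\mathcal{Z}*_N\mathcal{R}$; (iv) $[\mathcal{T}*_M\mathcal{Z}*_N\mathcal{A}*_M\mathcal{T}^H]^H=\mathcal{T}*_M\mathcal{Z}*_N\mathcal{A}*_M\mathcal{T}^H$.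
   Context: $\mathbb{C}^{I_1\times\cdots\times I_N}$ denotes the set of complex tensors of order $N$ and dimension $I_1\times\cdots\times I_N$. For $\mathcal{A}\in\mathbb{C}^{I_1\times\cdots\times I_N\times K_1\times\cdots\times K_N}$ and $\mathcal{B}\in\mathbb{C}^{K_1\times\cdots\times K_N\times J_1\times\cdots\times J_M}$, the Einstein product $\mathcal{A}*_N\mathcal{B}$ is defined by $(\mathcal{A}*_N\mathcal{B})_{i_1\dots i_N j_1\dots j_M}=\sum_{k_1,\dots,k_N}a_{i_1\dots i_N k_1\dots k_N}b_{k_1\dots k_N j_1\dots j_M}$; it is associative. For $\mathcal{A}\in\mathbb{C}^{I_1\times\cdots\times I_N\times J_1\times\cdots\times J_M}$, $\mathcal{A}^H\in\mathbb{C}^{J_1\times\cdots\times J_M\times I_1\times\cdots\times I_N}$ has entries $(\mathcal{A}^H)_{j_1\dots j_M i_1\dots i_N}=\overline{a_{i_1\dots i_N j_1\dots j_M}}$, and the Moore–Penrose inverse $\mathcal{A}^{\dagger}$ is the unique $\mathcal{X}\in\mathbb{C}^{J_1\times\cdots\times J_M\times I_1\times\cdots\times I_N}$ with $\mathcal{A}*_M\mathcal{X}*_N\mathcal{A}=\mathcal{A}$, $\mathcal{X}*_N\mathcal{A}*_M\mathcal{X}=\mathcal{X}$, $(\mathcal{A}*_M\mathcal{X})^H=\mathcal{A}*_M\mathcal{X}$, $(\mathcal{X}*_N\mathcal{A})^H=\mathcal{X}*_N\mathcal{A}$. *)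

theory Defs
  imports Complex_Main
begin

text \<open>A tensor in C^(D_1 x ... x D_n) is modelled as a function from index lists
  (0-based) to complex numbers, with dimension list ds = [D_1,...,D_n]; it is required
  to vanish outside the valid index set.\<close>

definition multi_idx :: "nat list \<Rightarrow> nat list set" where
  "multi_idx ds = {x. length x = length ds \<and> (\<forall>i<length ds. x ! i < ds ! i)}"

definition tensor :: "nat list \<Rightarrow> (nat list \<Rightarrow> complex) \<Rightarrow> bool" where
  "tensor ds A \<longleftrightarrow> (\<forall>x. x \<notin> multi_idx ds \<longrightarrow> A x = 0)"

definition ein :: "nat list \<Rightarrow> nat list \<Rightarrow> nat list \<Rightarrow>
    (nat list \<Rightarrow> complex) \<Rightarrow> (nat list \<Rightarrow> complex) \<Rightarrow> (nat list \<Rightarrow> complex)" where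
  "ein Is Ks Js A B = (\<lambda>x. if x \<in> multi_idx (Is @ Js)
      then (\<Sum>k\<in>multi_idx Ks. A (take (length Is) x @ k) * B (k @ drop (length Is) x))
      else 0)"

definition herm :: "nat list \<Rightarrow> nat list \<Rightarrow> (nat list \<Rightarrow> complex) \<Rightarrow> (nat list \<Rightarrow> complex)" where
  "herm Is Js A = (\<lambda>x. if x \<in> multi_idx (Js @ Is)
      then cnj (A (drop (length Js) x @ take (length Js) x)) else 0)"

definition is_MP :: "nat list \<Rightarrow> nat list \<Rightarrow> (nat list \<Rightarrow> complex) \<Rightarrow> (nat list \<Rightarrow> complex) \<Rightarrow> bool" where
  "is_MP Is Js A X \<longleftrightarrow> tensor (Js @ Is) X
     \<and> ein Is Js Js A (ein Js Is Js X A) = A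
     \<and> ein Js Is Is X (ein Is Js Is A X) = X
     \<and> herm Is Is (ein Is Js Is A X) = ein Is Js Is A X
     \<and> herm Js Js (ein Js Is Js X A) = ein Js Is Js X A"

definition pinv :: "nat list \<Rightarrow> nat list \<Rightarrow> (nat list \<Rightarrow> complex) \<Rightarrow> (nat list \<Rightarrow> complex)" where
  "pinv Is Js A = (THE X. is_MP Is Js A X)"

end

(*
  Write P = R R\<dagger> and Q = T\<dagger> T. Both are Hermitian, and since A = R S T and
  Z = T\<dagger> S\<dagger> R\<dagger>, we have P A = A = A Q and Z P = Z = Q Z. So the Penrose equations
  for A and Z can be tested after compression: multiplying by R on the left and T on the
  right shows that A Z A = A iff R\<dagger> (A Z A) T\<dagger> = R\<dagger> A T\<dagger>, and likewise
  Z A Z = Z iff T (Z A Z) R = T Z R. Since P = P\<^sup>H = (R\<dagger>)\<^sup>H R\<^sup>H, we get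
  A Z = P (A Z) P = (R\<dagger>)\<^sup>H (R\<^sup>H A Z R) R\<dagger>, so A Z is Hermitian iff
  R\<^sup>H A Z R is; dually Z A = T\<dagger> (T Z A T\<^sup>H) (T\<dagger>)\<^sup>H.

  That pinv really is the Moore-Penrose inverse rests on Penrose's existence argument: the
  powers of the Hermitian tensor B = A\<^sup>H A are linearly dependent, and because B\<^sup>2 X = 0
  forces B X = 0, such a relation yields an inner inverse G of B that is a polynomial in B.
  Then G A\<^sup>H is a {1,3}-inverse of A, and Y A X is the Moore-Penrose inverse whenever X is a
  {1,3}-inverse and Y a {1,4}-inverse.
*)
theory Submission
  imports Defs "HOL-Library.Function_Algebras"
begin

section \<open>Multi-indices and the Einstein product\<close>

lemma multi_idx_conv_list_all2: "multi_idx ds = {x. list_all2 (<) x ds}"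
  by (auto simp: multi_idx_def list_all2_conv_all_nth)

lemma multi_idx_length: "x \<in> multi_idx ds \<Longrightarrow> length x = length ds"
  by (simp add: multi_idx_def)

lemma append_in_multi_idx_iff:
  "length i = length Is \<Longrightarrow>
    i @ j \<in> multi_idx (Is @ Js) \<longleftrightarrow> i \<in> multi_idx Is \<and> j \<in> multi_idx Js"
  by (simp add: multi_idx_conv_list_all2 list_all2_append)

lemma multi_idx_appendE:
  assumes "x \<in> multi_idx (Is @ Js)"
  obtains i j where "x = i @ j" "i \<in> multi_idx Is" "j \<in> multi_idx Js"
  using assms by (auto simp: multi_idx_conv_list_all2 list_all2_append2)

lemma finite_multi_idx: "finite (multi_idx ds)"
proof (rule finite_subset)
  show "multi_idx ds \<subseteq> {xs. set xs \<subseteq> {..<sum_list ds} \<and> length xs = length ds}"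
    by (auto simp: multi_idx_def in_set_conv_nth) (meson elem_le_sum_list order_less_le_trans)
  show "finite {xs. set xs \<subseteq> {..<sum_list ds} \<and> length xs = length ds}"
    by (rule finite_lists_length_eq) simp
qed

lemma ein_append:
  "i \<in> multi_idx Is \<Longrightarrow> j \<in> multi_idx Js \<Longrightarrow>
    ein Is Ks Js A B (i @ j) = (\<Sum>k\<in>multi_idx Ks. A (i @ k) * B (k @ j))"
  by (simp add: ein_def append_in_multi_idx_iff multi_idx_length)

lemma herm_append:
  "i \<in> multi_idx Is \<Longrightarrow> j \<in> multi_idx Js \<Longrightarrow> herm Is Js A (j @ i) = cnj (A (i @ j))"
  by (simp add: herm_def append_in_multi_idx_iff multi_idx_length)

lemma tensor_ein: "tensor (Is @ Js) (ein Is Ks Js A B)"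
  by (simp add: tensor_def ein_def)

lemma tensor_herm: "tensor (Js @ Is) (herm Is Js A)"
  by (simp add: tensor_def herm_def)

lemma tensor_eqI:
  assumes "tensor (Is @ Js) X" "tensor (Is @ Js) Y"
    and "\<And>i j. i \<in> multi_idx Is \<Longrightarrow> j \<in> multi_idx Js \<Longrightarrow> X (i @ j) = Y (i @ j)"
  shows "X = Y"
proof
  fix x
  show "X x = Y x"
    using assms by (cases "x \<in> multi_idx (Is @ Js)") (auto elim: multi_idx_appendE simp: tensor_def)
qed

lemma ein_assoc: "ein Is Ks Ls A (ein Ks Ms Ls B C) = ein Is Ms Ls (ein Is Ks Ms A B) C"
proof (rule tensor_eqI[OF tensor_ein tensor_ein])
  fix i l
  assume "i \<in> multi_idx Is" "l \<in> multi_idx Ls"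
  then have "ein Is Ks Ls A (ein Ks Ms Ls B C) (i @ l)
      = (\<Sum>k\<in>multi_idx Ks. \<Sum>m\<in>multi_idx Ms. A (i @ k) * B (k @ m) * C (m @ l))"
    and "ein Is Ms Ls (ein Is Ks Ms A B) C (i @ l)
      = (\<Sum>m\<in>multi_idx Ms. \<Sum>k\<in>multi_idx Ks. A (i @ k) * B (k @ m) * C (m @ l))"
    by (simp_all add: ein_append sum_distrib_left sum_distrib_right mult.assoc)
  then show "ein Is Ks Ls A (ein Ks Ms Ls B C) (i @ l) = ein Is Ms Ls (ein Is Ks Ms A B) C (i @ l)"
    by (simp add: sum.swap[of _ "multi_idx Ks"])
qed

lemma herm_ein: "herm Is Ls (ein Is Ks Ls A B) = ein Ls Ks Is (herm Ks Ls B) (herm Is Ks A)"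
  by (rule tensor_eqI[OF tensor_herm tensor_ein])
    (auto simp: herm_append ein_append mult.commute intro: sum.cong)

lemma herm_herm: "tensor (Is @ Js) A \<Longrightarrow> herm Js Is (herm Is Js A) = A"
  by (rule tensor_eqI[OF tensor_herm]) (auto simp: herm_append)

lemma herm_congruence:
  assumes "tensor (Ks @ Is) X" and "herm Is Is N = N"
  shows "herm Ks Ks (ein Ks Is Ks X (ein Is Is Ks N (herm Ks Is X)))
    = ein Ks Is Ks X (ein Is Is Ks N (herm Ks Is X))"
  using assms by (simp add: herm_ein herm_herm ein_assoc)

lemma ein_diff_right: "ein Is Ks Js A (B - B') = ein Is Ks Js A B - ein Is Ks Js A B'"
  by (rule ext) (simp add: ein_def algebra_simps sum_subtractf)

lemma ein_zero_right: "ein Is Ks Js A 0 = 0"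
  by (rule ext) (simp add: ein_def)

lemma gram_eq_0_imp_eq_0:
  assumes "tensor (Is @ Ks) E" and "ein Ks Is Ks (herm Is Ks E) E = 0"
  shows "E = 0"
proof (rule tensor_eqI[OF assms(1)])
  show "tensor (Is @ Ks) 0"
    by (simp add: tensor_def)
  fix i k
  assume i: "i \<in> multi_idx Is" and k: "k \<in> multi_idx Ks"
  have "(\<Sum>i'\<in>multi_idx Is. E (i' @ k) * cnj (E (i' @ k))) = 0"
    using fun_cong[OF assms(2), of "k @ k"] k by (simp add: ein_append herm_append mult.commute)
  then have "(\<Sum>i'\<in>multi_idx Is. complex_of_real ((cmod (E (i' @ k)))\<^sup>2)) = 0"
    by (simp only: complex_norm_square)
  then have "(\<Sum>i'\<in>multi_idx Is. (cmod (E (i' @ k)))\<^sup>2) = 0"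
    by (metis of_real_eq_0_iff of_real_sum)
  with i show "E (i @ k) = 0 (i @ k)"
    by (simp add: sum_nonneg_eq_0_iff finite_multi_idx)
qed

lemma ein_herm_cancel_left:
  assumes "ein Ks Is Ls (herm Is Ks C) (ein Is Ks Ls C X) = ein Ks Is Ls (herm Is Ks C) (ein Is Ks Ls C Y)"
  shows "ein Is Ks Ls C X = ein Is Ks Ls C Y"
proof -
  have "ein Ls Is Ls (herm Is Ls (ein Is Ks Ls C (X - Y))) (ein Is Ks Ls C (X - Y))
      = ein Ls Ks Ls (herm Ks Ls (X - Y)) (ein Ks Is Ls (herm Is Ks C) (ein Is Ks Ls C (X - Y)))"
    by (simp add: herm_ein ein_assoc)
  also have "\<dots> = 0"
    using assms by (simp add: ein_diff_right ein_zero_right)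
  finally have "ein Is Ks Ls C (X - Y) = 0"
    by (rule gram_eq_0_imp_eq_0[OF tensor_ein])
  then show ?thesis
    by (simp add: ein_diff_right)
qed

section \<open>Uniqueness of the Moore-Penrose inverse\<close>

lemma ein_eq_if_inverse_13:
  assumes "ein Is Js Js A (ein Js Is Js X A) = A" "herm Is Is (ein Is Js Is A X) = ein Is Js Is A X"
    and "ein Is Js Js A (ein Js Is Js Y A) = A" "herm Is Is (ein Is Js Is A Y) = ein Is Js Is A Y"
  shows "ein Is Js Is A X = ein Is Js Is A Y"
proof -
  have "ein Is Is Is (ein Is Js Is A Y) (ein Is Js Is A X)
      = ein Is Js Is (ein Is Js Js A (ein Js Is Js Y A)) X"
    by (simp only: ein_assoc)
  then have "ein Is Js Is A X = herm Is Is (ein Is Is Is (ein Is Js Is A Y) (ein Is Js Is A X))"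
    using assms(2,3) by simp
  also have "\<dots> = ein Is Is Is (ein Is Js Is A X) (ein Is Js Is A Y)"
    using assms(2,4) by (simp add: herm_ein)
  also have "\<dots> = ein Is Js Is (ein Is Js Js A (ein Js Is Js X A)) Y"
    by (simp only: ein_assoc)
  finally show ?thesis
    using assms(1) by simp
qed

lemma ein_eq_if_inverse_14:
  assumes "ein Is Js Js A (ein Js Is Js X A) = A" "herm Js Js (ein Js Is Js X A) = ein Js Is Js X A"
    and "ein Is Js Js A (ein Js Is Js Y A) = A" "herm Js Js (ein Js Is Js Y A) = ein Js Is Js Y A"
  shows "ein Js Is Js X A = ein Js Is Js Y A"
proof -
  have "ein Js Js Js (ein Js Is Js X A) (ein Js Is Js Y A)
      = ein Js Is Js X (ein Is Js Js A (ein Js Is Js Y A))"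
    by (simp only: ein_assoc)
  then have "ein Js Is Js X A = herm Js Js (ein Js Js Js (ein Js Is Js X A) (ein Js Is Js Y A))"
    using assms(2,3) by simp
  also have "\<dots> = ein Js Js Js (ein Js Is Js Y A) (ein Js Is Js X A)"
    using assms(2,4) by (simp add: herm_ein)
  also have "\<dots> = ein Js Is Js Y (ein Is Js Js A (ein Js Is Js X A))"
    by (simp only: ein_assoc)
  finally show ?thesis
    using assms(1) by simp
qed

lemma MP_unique:
  assumes "is_MP Is Js A X" and "is_MP Is Js A Y"
  shows "X = Y"
proof -
  have AX: "ein Is Js Is A X = ein Is Js Is A Y" and XA: "ein Js Is Js X A = ein Js Is Js Y A"
    using assms ein_eq_if_inverse_13 ein_eq_if_inverse_14 unfolding is_MP_def by blast+
  have "X = ein Js Is Is X (ein Is Js Is A Y)"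
    using assms(1) AX unfolding is_MP_def by simp
  also have "\<dots> = ein Js Js Is (ein Js Is Js Y A) Y"
    using XA by (simp add: ein_assoc)
  also have "\<dots> = Y"
    using assms(2) unfolding is_MP_def by (simp add: ein_assoc)
  finally show ?thesis .
qed

lemma pinv_eqI: "is_MP Is Js A X \<Longrightarrow> pinv Is Js A = X"
  unfolding pinv_def by (rule the_equality) (auto intro: MP_unique)

section \<open>Existence of the Moore-Penrose inverse\<close>

lemma (in vector_space) sequence_dependent_in_finite_span:
  assumes "finite T" and "range F \<subseteq> span T"
  shows "\<exists>c. (\<exists>k\<le>card T. c k \<noteq> 0) \<and> (\<Sum>k\<le>card T. c k *s F k) = 0"
proof (cases "inj_on F {..card T}")
  case True
  have "dependent (F ` {..card T})"
    using independent_span_bound[OF assms(1)] assms(2) True by (fastforce simp: card_image)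
  then obtain u where u: "\<exists>v\<in>F ` {..card T}. u v \<noteq> 0" "(\<Sum>v\<in>F ` {..card T}. u v *s v) = 0"
    by (auto simp: dependent_finite)
  then show ?thesis
    by (intro exI[of _ "u \<circ> F"]) (auto simp: sum.reindex[OF True])
next
  case False
  then obtain a b where ab: "a \<le> card T" "b \<le> card T" "a \<noteq> b" "F a = F b"
    by (auto simp: inj_on_def)
  let ?c = "\<lambda>k. if k = a then 1 else if k = b then -1 else 0"
  have "(\<Sum>k\<le>card T. ?c k *s F k) = (\<Sum>k\<le>card T. (if k = a then F k else 0) - (if k = b then F k else 0))"
    using ab(3) by (intro sum.cong) auto
  also have "\<dots> = 0"
    using ab by (simp add: sum_subtractf)
  finally show ?thesis
    using ab(1) by (intro exI[of _ ?c]) auto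
qed

lemma sum_fun_apply: "(\<Sum>k\<in>K. f k) x = (\<Sum>k\<in>K. f k x)"
  by (induction K rule: infinite_finite_induct) auto

definition tscale :: "complex \<Rightarrow> (nat list \<Rightarrow> complex) \<Rightarrow> nat list \<Rightarrow> complex" where
  "tscale c X = (\<lambda>x. c * X x)"

interpretation tensor_space: vector_space tscale
  by unfold_locales (auto simp: tscale_def algebra_simps)

lemma tensor_in_span_unit:
  assumes "tensor Ds X"
  shows "X \<in> tensor_space.span ((\<lambda>d x. if x = d then 1 else 0) ` multi_idx Ds)"
proof -
  have "X = (\<Sum>d\<in>multi_idx Ds. tscale (X d) (\<lambda>x. if x = d then 1 else 0))"
    using assms by (auto simp: fun_eq_iff sum_fun_apply tscale_def tensor_def finite_multi_idx
        if_distrib sum.delta cong: if_cong)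
  also have "\<dots> \<in> tensor_space.span ((\<lambda>d x. if x = d then 1 else 0) ` multi_idx Ds)"
    by (intro tensor_space.span_sum tensor_space.span_scale tensor_space.span_base) auto
  finally show ?thesis .
qed

lemma tensor_tscale: "tensor Ds X \<Longrightarrow> tensor Ds (tscale c X)"
  by (simp add: tensor_def tscale_def)

lemma ein_tscale_left: "ein Is Ks Js (tscale c A) B = tscale c (ein Is Ks Js A B)"
  by (rule ext) (simp add: ein_def tscale_def sum_distrib_left mult.assoc)

lemma ein_tscale_right: "ein Is Ks Js A (tscale c B) = tscale c (ein Is Ks Js A B)"
  by (rule ext) (simp add: ein_def tscale_def sum_distrib_left algebra_simps)

lemma ein_add_right: "ein Is Ks Js A (B + B') = ein Is Ks Js A B + ein Is Ks Js A B'"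
  by (rule ext) (simp add: ein_def algebra_simps sum.distrib)

definition ident :: "nat list \<Rightarrow> nat list \<Rightarrow> complex" where
  "ident Ds =
    (\<lambda>x. if x \<in> multi_idx (Ds @ Ds) \<and> take (length Ds) x = drop (length Ds) x then 1 else 0)"

lemma tensor_ident: "tensor (Ds @ Ds) (ident Ds)"
  by (simp add: tensor_def ident_def)

lemma ident_append:
  "k \<in> multi_idx Ds \<Longrightarrow> j \<in> multi_idx Ds \<Longrightarrow> ident Ds (k @ j) = (if k = j then 1 else 0)"
  by (simp add: ident_def append_in_multi_idx_iff multi_idx_length)

lemma ein_ident_left: "tensor (Ds @ Js) A \<Longrightarrow> ein Ds Ds Js (ident Ds) A = A"
  by (rule tensor_eqI[OF tensor_ein])
    (auto simp: ein_append ident_append if_distrib if_distribR sum.delta finite_multi_idx cong: if_cong)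

lemma ein_ident_right: "tensor (Is @ Ds) A \<Longrightarrow> ein Is Ds Ds A (ident Ds) = A"
  by (rule tensor_eqI[OF tensor_ein])
    (auto simp: ein_append ident_append if_distrib sum.delta finite_multi_idx cong: if_cong)

primrec tpow :: "nat list \<Rightarrow> (nat list \<Rightarrow> complex) \<Rightarrow> nat \<Rightarrow> nat list \<Rightarrow> complex" where
  "tpow Ds B 0 = ident Ds"
| "tpow Ds B (Suc k) = ein Ds Ds Ds B (tpow Ds B k)"

definition tpoly ::
    "nat list \<Rightarrow> (nat list \<Rightarrow> complex) \<Rightarrow> (nat \<Rightarrow> complex) \<Rightarrow> nat \<Rightarrow> nat list \<Rightarrow> complex" where
  "tpoly Ds B c n = (\<Sum>k<n. tscale (c k) (tpow Ds B k))"

lemma tensor_tpow: "tensor (Ds @ Ds) (tpow Ds B k)"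
  by (cases k) (simp_all add: tensor_ident tensor_ein)

lemma tensor_tpoly: "tensor (Ds @ Ds) (tpoly Ds B c n)"
  using tensor_tpow by (simp add: tensor_def tpoly_def tscale_def sum_fun_apply)

lemma ein_tpoly_left:
  "ein Ds Ds Js (tpoly Ds B c n) A = (\<Sum>k<n. tscale (c k) (ein Ds Ds Js (tpow Ds B k) A))"
  by (rule ext) (auto simp: ein_def tpoly_def tscale_def sum_fun_apply sum_distrib_left
      sum_distrib_right algebra_simps intro: sum.swap)

lemma ein_tpoly_right:
  "ein Is Ds Ds A (tpoly Ds B c n) = (\<Sum>k<n. tscale (c k) (ein Is Ds Ds A (tpow Ds B k)))"
  by (rule ext) (auto simp: ein_def tpoly_def tscale_def sum_fun_apply sum_distrib_left
      algebra_simps intro: sum.swap)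

lemma tpow_commute:
  "tensor (Ds @ Ds) B \<Longrightarrow> ein Ds Ds Ds B (tpow Ds B k) = ein Ds Ds Ds (tpow Ds B k) B"
proof (induction k)
  case 0
  then show ?case
    by (simp add: ein_ident_left ein_ident_right)
next
  case (Suc k)
  then show ?case
    by (simp add: ein_assoc)
qed

lemma tpoly_commute:
  "tensor (Ds @ Ds) B \<Longrightarrow> ein Ds Ds Ds B (tpoly Ds B c n) = ein Ds Ds Ds (tpoly Ds B c n) B"
  by (simp add: ein_tpoly_left ein_tpoly_right tpow_commute)

lemma ein_tpoly_Suc:
  assumes "tensor (Ds @ Ds) B"
  shows "ein Ds Ds Ds B (tpoly Ds B c (Suc n))
    = tscale (c 0) B + ein Ds Ds Ds B (ein Ds Ds Ds B (tpoly Ds B (c \<circ> Suc) n))"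
proof -
  have "tpoly Ds B c (Suc n) = tscale (c 0) (ident Ds) + ein Ds Ds Ds B (tpoly Ds B (c \<circ> Suc) n)"
    unfolding tpoly_def sum.lessThan_Suc_shift by (simp add: ein_tpoly_right[unfolded tpoly_def])
  then show ?thesis
    using assms by (simp add: ein_add_right ein_tscale_right ein_ident_right)
qed

lemma ein_herm_square_eq_0:
  assumes "herm Ds Ds B = B" and "ein Ds Ds Js B (ein Ds Ds Js B W) = 0"
  shows "ein Ds Ds Js B W = 0"
  using ein_herm_cancel_left[of Ds Ds Js B W 0] assms by (simp add: ein_zero_right)

lemma tpoly_annihilator_exists:
  "\<exists>c n. (\<exists>k<n. c k \<noteq> 0) \<and> ein Ds Ds Ds B (tpoly Ds B c n) = 0"
proof -
  let ?U = "(\<lambda>d x. if x = d then 1 else 0) ` multi_idx (Ds @ Ds) :: (nat list \<Rightarrow> complex) set"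
  have fin: "finite ?U"
    by (simp add: finite_multi_idx)
  have span: "range (\<lambda>k. tpow Ds B (Suc k)) \<subseteq> tensor_space.span ?U"
    by (rule image_subsetI) (rule tensor_in_span_unit[OF tensor_tpow])
  obtain c where c: "\<exists>k\<le>card ?U. c k \<noteq> 0"
    and "(\<Sum>k\<le>card ?U. tscale (c k) (tpow Ds B (Suc k))) = 0"
    using tensor_space.sequence_dependent_in_finite_span[OF fin span] by blast
  then have "ein Ds Ds Ds B (tpoly Ds B c (Suc (card ?U))) = 0"
    by (simp add: ein_tpoly_right lessThan_Suc_atMost)
  moreover have "\<exists>k<Suc (card ?U). c k \<noteq> 0"
    using c by (auto simp: less_Suc_eq_le)
  ultimately show ?thesis
    by blast
qed

lemma ginv_if_tpoly_annihilator:
  assumes "tensor (Ds @ Ds) B" and "herm Ds Ds B = B"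
  shows "(\<exists>k<n. c k \<noteq> 0) \<Longrightarrow> ein Ds Ds Ds B (tpoly Ds B c n) = 0 \<Longrightarrow>
    \<exists>G. tensor (Ds @ Ds) G \<and> ein Ds Ds Ds B (ein Ds Ds Ds G B) = B"
proof (induction n arbitrary: c)
  case 0
  then show ?case
    by simp
next
  case (Suc n)
  let ?P = "tpoly Ds B (c \<circ> Suc) n"
  have "tscale (c 0) B + ein Ds Ds Ds B (ein Ds Ds Ds B ?P) = 0"
    using Suc.prems(2) by (simp only: ein_tpoly_Suc[OF assms(1)])
  then have rel: "ein Ds Ds Ds B (ein Ds Ds Ds B ?P) = tscale (- c 0) B"
    by (simp add: add_eq_0_iff)
  show ?case
  proof (cases "c 0 = 0")
    case True
    have "\<exists>k<n. (c \<circ> Suc) k \<noteq> 0"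
      using Suc.prems(1) True by (auto simp: less_Suc_eq_0_disj)
    moreover have "ein Ds Ds Ds B ?P = 0"
      by (rule ein_herm_square_eq_0[OF assms(2)]) (simp add: rel True)
    ultimately show ?thesis
      by (rule Suc.IH)
  next
    case False
    let ?G = "tscale (- 1 / c 0) ?P"
    have "ein Ds Ds Ds B (ein Ds Ds Ds ?G B) = tscale (- 1 / c 0) (ein Ds Ds Ds B (ein Ds Ds Ds B ?P))"
      by (simp only: ein_tscale_left ein_tscale_right tpoly_commute[OF assms(1)])
    also have "\<dots> = B"
      using False by (simp add: rel)
    finally show ?thesis
      by (blast intro: tensor_tscale tensor_tpoly)
  qed
qed

lemma herm_ginv_exists:
  assumes "tensor (Ds @ Ds) B" and "herm Ds Ds B = B"
  shows "\<exists>G. herm Ds Ds G = G \<and> ein Ds Ds Ds B (ein Ds Ds Ds G B) = B"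
proof -
  obtain G where tG: "tensor (Ds @ Ds) G" and BGB: "ein Ds Ds Ds (ein Ds Ds Ds B G) B = B"
    using tpoly_annihilator_exists ginv_if_tpoly_annihilator[OF assms] by (metis ein_assoc)
  have "ein Ds Ds Ds (ein Ds Ds Ds B (herm Ds Ds G)) B = B"
    using arg_cong[OF BGB, of "herm Ds Ds"] assms(2) by (simp add: herm_ein ein_assoc)
  \<comment> \<open>G B G^H is a Hermitian inner inverse of B\<close>
  with BGB have "ein Ds Ds Ds B (ein Ds Ds Ds (ein Ds Ds Ds G (ein Ds Ds Ds B (herm Ds Ds G))) B) = B"
    by (simp add: ein_assoc)
  then show ?thesis
    using herm_congruence[OF tG assms(2)] by (intro exI conjI)
qed

lemma inverse_13_exists:
  assumes "tensor (Is @ Js) A"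
  shows "\<exists>X. ein Is Js Js A (ein Js Is Js X A) = A \<and> herm Is Is (ein Is Js Is A X) = ein Is Js Is A X"
proof -
  let ?B = "ein Js Is Js (herm Is Js A) A"
  have "herm Js Js ?B = ?B"
    using assms by (simp add: herm_ein herm_herm)
  then obtain G where hG: "herm Js Js G = G" and BGB: "ein Js Js Js ?B (ein Js Js Js G ?B) = ?B"
    using herm_ginv_exists[OF tensor_ein] by blast
  have "ein Is Js Js A (ein Js Js Js G ?B) = ein Is Js Js A (ident Js)"
    by (rule ein_herm_cancel_left) (use BGB in \<open>simp add: ein_assoc ein_ident_right tensor_ein\<close>)
  then have "ein Is Js Js A (ein Js Is Js (ein Js Js Is G (herm Is Js A)) A) = A"
    using assms by (simp add: ein_assoc ein_ident_right)
  then show ?thesis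
    using herm_congruence[OF assms hG] by (intro exI conjI)
qed

lemma is_MP_of_inverses_13_14:
  assumes A3: "ein Is Js Js A (ein Js Is Js X A) = A" and H3: "herm Is Is (ein Is Js Is A X) = ein Is Js Is A X"
    and A4: "ein Is Js Js A (ein Js Is Js Y A) = A" and H4: "herm Js Js (ein Js Is Js Y A) = ein Js Is Js Y A"
  shows "is_MP Is Js A (ein Js Is Is Y (ein Is Js Is A X))"
proof -
  let ?M = "ein Js Is Is Y (ein Is Js Is A X)"
  have AM: "ein Is Js Is A ?M = ein Is Js Is A X"
  proof -
    have "ein Is Js Is A ?M = ein Is Js Is (ein Is Js Js A (ein Js Is Js Y A)) X"
      by (simp only: ein_assoc)
    then show ?thesis
      using A4 by simp
  qed
  have MA: "ein Js Is Js ?M A = ein Js Is Js Y A"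
  proof -
    have "ein Js Is Js ?M A = ein Js Is Js Y (ein Is Js Js A (ein Js Is Js X A))"
      by (simp only: ein_assoc)
    then show ?thesis
      using A3 by simp
  qed
  have "ein Js Is Is ?M (ein Is Js Is A ?M) = ein Js Is Is Y (ein Is Js Is (ein Is Js Js A (ein Js Is Js X A)) X)"
    unfolding AM by (simp only: ein_assoc)
  then have "ein Js Is Is ?M (ein Is Js Is A ?M) = ?M"
    using A3 by simp
  then show ?thesis
    unfolding is_MP_def using AM MA A4 H3 H4 by (simp add: tensor_ein)
qed

lemma MP_exists:
  assumes "tensor (Is @ Js) A"
  shows "\<exists>X. is_MP Is Js A X"
proof -
  obtain X where "ein Is Js Js A (ein Js Is Js X A) = A" "herm Is Is (ein Is Js Is A X) = ein Is Js Is A X"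
    using inverse_13_exists[OF assms] by blast
  moreover obtain Y' where Y': "ein Js Is Is (herm Is Js A) (ein Is Js Is Y' (herm Is Js A)) = herm Is Js A"
    "herm Js Js (ein Js Is Js (herm Is Js A) Y') = ein Js Is Js (herm Is Js A) Y'"
    using inverse_13_exists[OF tensor_herm] by blast
  \<comment> \<open>the adjoint of a {1,3}-inverse of A^H is a {1,4}-inverse of A\<close>
  moreover have "ein Is Js Js A (ein Js Is Js (herm Is Js Y') A) = A"
    using arg_cong[OF Y'(1), of "herm Js Is"] assms by (simp add: herm_ein herm_herm ein_assoc)
  moreover have "herm Js Js (ein Js Is Js (herm Is Js Y') A) = ein Js Is Js (herm Is Js Y') A"
    using arg_cong[OF Y'(2), of "herm Js Js"] assms by (simp add: herm_ein herm_herm)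
  ultimately show ?thesis
    by (blast intro: is_MP_of_inverses_13_14)
qed

lemma pinv_is_MP:
  assumes "tensor (Is @ Js) A"
  shows "is_MP Is Js A (pinv Is Js A)"
proof -
  have "\<exists>!X. is_MP Is Js A X"
    using MP_exists[OF assms] MP_unique by blast
  then show ?thesis
    unfolding pinv_def by (rule theI')
qed

section \<open>The reverse-order law\<close>

text \<open>Applies an identity between products of three factors inside the left-nested products
  to which simp normalizes with ein_assoc.\<close>

lemma ein_assoc_subst:
  "ein Ks Ns Ls (ein Ks Ms Ns U V) W = X \<Longrightarrow>
    ein Is Ns Ls (ein Is Ms Ns (ein Is Ks Ms P U) V) W = ein Is Ks Ls P X"
  by (simp flip: ein_assoc)

lemma ein_eq_if_sandwich_eq:
  assumes "ein Is Is Js (ein Is Hs Is P P') X = X" and "ein Is Js Js X (ein Js Gs Js Q' Q) = X"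
    and "ein Is Is Js (ein Is Hs Is P P') Y = Y" and "ein Is Js Js Y (ein Js Gs Js Q' Q) = Y"
    and "ein Hs Is Gs P' (ein Is Js Gs X Q') = ein Hs Is Gs P' (ein Is Js Gs Y Q')"
  shows "X = Y"
proof -
  have sandwich: "ein Is Is Js (ein Is Hs Is P P') (ein Is Js Js W (ein Js Gs Js Q' Q))
      = ein Is Hs Js P (ein Hs Gs Js (ein Hs Is Gs P' (ein Is Js Gs W Q')) Q)" for W
    by (simp only: ein_assoc)
  show ?thesis
    using sandwich[of X] sandwich[of Y] assms by simp
qed

lemma herm_if_herm_compression:
  assumes "tensor (Is @ Ks) X'" and P: "herm Is Is (ein Is Ks Is X' X) = ein Is Ks Is X' X"
    and "ein Is Is Is (ein Is Ks Is X' X) N = N" and "ein Is Is Is N (ein Is Ks Is X' X) = N"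
    and "herm Ks Ks (ein Ks Is Ks X (ein Is Is Ks N (herm Ks Is X)))
      = ein Ks Is Ks X (ein Is Is Ks N (herm Ks Is X))"
  shows "herm Is Is N = N"
proof -
  have "N = ein Is Is Is (ein Is Is Is (ein Is Ks Is X' X) N) (herm Is Is (ein Is Ks Is X' X))"
    using assms(3,4) P by simp
  then have N: "N = ein Is Ks Is X' (ein Ks Ks Is (ein Ks Is Ks X (ein Is Is Ks N (herm Ks Is X))) (herm Is Ks X'))"
    by (simp add: herm_ein ein_assoc)
  from herm_congruence[OF assms(1,5)] show ?thesis
    by (simp only: N[symmetric])
qed

lemma reverse_order_conditions_if_MP:
  assumes "tensor (Is @ Hs) R" and "tensor (Gs @ Js) T" and "is_MP Is Js A Z"
  shows "ein Hs Is Gs R' (ein Is Js Gs A (ein Js Is Gs Z (ein Is Js Gs A T')))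
       = ein Hs Is Gs R' (ein Is Js Gs A T')
     \<and> ein Gs Js Hs T (ein Js Is Hs Z (ein Is Js Hs A (ein Js Is Hs Z R)))
       = ein Gs Js Hs T (ein Js Is Hs Z R)
     \<and> herm Hs Hs (ein Hs Is Hs (herm Is Hs R) (ein Is Js Hs A (ein Js Is Hs Z R)))
       = ein Hs Is Hs (herm Is Hs R) (ein Is Js Hs A (ein Js Is Hs Z R))
     \<and> herm Gs Gs (ein Gs Js Gs T (ein Js Is Gs Z (ein Is Js Gs A (herm Gs Js T))))
       = ein Gs Js Gs T (ein Js Is Gs Z (ein Is Js Gs A (herm Gs Js T)))"
proof -
  have AZA: "ein Is Js Js A (ein Js Is Js Z A) = A" and ZAZ: "ein Js Is Is Z (ein Is Js Is A Z) = Z"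
    and AZ: "herm Is Is (ein Is Js Is A Z) = ein Is Js Is A Z"
    and ZA: "herm Js Js (ein Js Is Js Z A) = ein Js Is Js Z A"
    using assms(3) unfolding is_MP_def by blast+
  show ?thesis
  proof (intro conjI)
    show "ein Hs Is Gs R' (ein Is Js Gs A (ein Js Is Gs Z (ein Is Js Gs A T')))
      = ein Hs Is Gs R' (ein Is Js Gs A T')"
      using AZA by (simp add: ein_assoc)
    show "ein Gs Js Hs T (ein Js Is Hs Z (ein Is Js Hs A (ein Js Is Hs Z R)))
      = ein Gs Js Hs T (ein Js Is Hs Z R)"
      using ZAZ by (simp add: ein_assoc)
    show "herm Hs Hs (ein Hs Is Hs (herm Is Hs R) (ein Is Js Hs A (ein Js Is Hs Z R)))
      = ein Hs Is Hs (herm Is Hs R) (ein Is Js Hs A (ein Js Is Hs Z R))"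
      using herm_congruence[OF tensor_herm[where Is = Is and Js = Hs and A = R] AZ]
      by (simp add: herm_herm[OF assms(1)] ein_assoc)
    show "herm Gs Gs (ein Gs Js Gs T (ein Js Is Gs Z (ein Is Js Gs A (herm Gs Js T))))
      = ein Gs Js Gs T (ein Js Is Gs Z (ein Is Js Gs A (herm Gs Js T)))"
      using herm_congruence[OF assms(2) ZA] by (simp add: ein_assoc)
  qed
qed

lemma is_MP_iff_reverse_order_conditions:
  assumes R: "tensor (Is @ Hs) R" "is_MP Is Hs R R'"
    and T: "tensor (Gs @ Js) T" "is_MP Gs Js T T'"
    and PA: "ein Is Is Js (ein Is Hs Is R R') A = A"
    and AQ: "ein Is Js Js A (ein Js Gs Js T' T) = A"
    and ZP: "ein Js Is Is Z (ein Is Hs Is R R') = Z"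
    and QZ: "ein Js Js Is (ein Js Gs Js T' T) Z = Z"
  shows "is_MP Is Js A Z \<longleftrightarrow>
    (ein Hs Is Gs R' (ein Is Js Gs A (ein Js Is Gs Z (ein Is Js Gs A T')))
       = ein Hs Is Gs R' (ein Is Js Gs A T')
     \<and> ein Gs Js Hs T (ein Js Is Hs Z (ein Is Js Hs A (ein Js Is Hs Z R)))
       = ein Gs Js Hs T (ein Js Is Hs Z R)
     \<and> herm Hs Hs (ein Hs Is Hs (herm Is Hs R) (ein Is Js Hs A (ein Js Is Hs Z R)))
       = ein Hs Is Hs (herm Is Hs R) (ein Is Js Hs A (ein Js Is Hs Z R))
     \<and> herm Gs Gs (ein Gs Js Gs T (ein Js Is Gs Z (ein Is Js Gs A (herm Gs Js T))))
       = ein Gs Js Gs T (ein Js Is Gs Z (ein Is Js Gs A (herm Gs Js T))))"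
    (is "_ \<longleftrightarrow> ?i \<and> ?ii \<and> ?iii \<and> ?iv")
proof
  assume "is_MP Is Js A Z"
  then show "?i \<and> ?ii \<and> ?iii \<and> ?iv"
    by (rule reverse_order_conditions_if_MP[OF R(1) T(1)])
next
  assume "?i \<and> ?ii \<and> ?iii \<and> ?iv"
  then have i: ?i and ii: ?ii and iii: ?iii and iv: ?iv
    by blast+
  have "tensor (Hs @ Is) R'" and RR': "herm Is Is (ein Is Hs Is R R') = ein Is Hs Is R R'"
    using R(2) unfolding is_MP_def by blast+
  have "tensor (Js @ Gs) T'" and T'T: "herm Js Js (ein Js Gs Js T' T) = ein Js Gs Js T' T"
    using T(2) unfolding is_MP_def by blast+
  have AQ': "ein Is Gs Js (ein Is Js Gs A T') T = A"
    using AQ by (simp add: ein_assoc)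
  have ZP': "ein Js Hs Is (ein Js Is Hs Z R) R' = Z"
    using ZP by (simp add: ein_assoc)
  have Pherm: "ein Is Hs Is (herm Hs Is R') (herm Is Hs R) = ein Is Hs Is R R'"
    using RR' by (simp add: herm_ein)
  note normalize = ein_assoc PA QZ AQ' ZP' Pherm ein_assoc_subst[OF AQ'] ein_assoc_subst[OF ZP']
  have "tensor (Js @ Is) Z"
    using QZ tensor_ein by metis
  moreover have "ein Is Js Js A (ein Js Is Js Z A) = A"
    by (rule ein_eq_if_sandwich_eq[OF _ _ PA AQ]) (use i in \<open>simp_all add: normalize\<close>)
  moreover have "ein Js Is Is Z (ein Is Js Is A Z) = Z"
    by (rule ein_eq_if_sandwich_eq[OF _ _ QZ ZP]) (use ii in \<open>simp_all add: normalize\<close>)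
  moreover have "herm Is Is (ein Is Js Is A Z) = ein Is Js Is A Z"
    by (rule herm_if_herm_compression[where Ks = Hs and X' = "herm Hs Is R'" and X = "herm Is Hs R"])
      (use RR' iii in \<open>simp_all add: normalize tensor_herm herm_herm[OF R(1)]\<close>)
  moreover have "herm Js Js (ein Js Is Js Z A) = ein Js Is Js Z A"
    by (rule herm_if_herm_compression[where Ks = Gs and X' = T' and X = T])
      (use T'T iv \<open>tensor (Js @ Gs) T'\<close> in \<open>simp_all add: normalize\<close>)
  ultimately show "is_MP Is Js A Z"
    unfolding is_MP_def by blast
qed

theorem theorem4p1:
  fixes Is Js Hs Gs :: "nat list"
    and R S T A Z :: "nat list \<Rightarrow> complex"
  assumes "tensor (Is @ Hs) R" and "tensor (Hs @ Gs) S" and "tensor (Gs @ Js) T"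
    and "A = ein Is Hs Js R (ein Hs Gs Js S T)"
    and "Z = ein Js Gs Is (pinv Gs Js T) (ein Gs Hs Is (pinv Hs Gs S) (pinv Is Hs R))"
  shows "pinv Is Js A = Z \<longleftrightarrow>
    (ein Hs Is Gs (pinv Is Hs R) (ein Is Js Gs A (ein Js Is Gs Z (ein Is Js Gs A (pinv Gs Js T))))
       = ein Hs Is Gs (pinv Is Hs R) (ein Is Js Gs A (pinv Gs Js T))
     \<and> ein Gs Js Hs T (ein Js Is Hs Z (ein Is Js Hs A (ein Js Is Hs Z R)))
       = ein Gs Js Hs T (ein Js Is Hs Z R)
     \<and> herm Hs Hs (ein Hs Is Hs (herm Is Hs R) (ein Is Js Hs A (ein Js Is Hs Z R)))
       = ein Hs Is Hs (herm Is Hs R) (ein Is Js Hs A (ein Js Is Hs Z R))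
     \<and> herm Gs Gs (ein Gs Js Gs T (ein Js Is Gs Z (ein Is Js Gs A (herm Gs Js T))))
       = ein Gs Js Gs T (ein Js Is Gs Z (ein Is Js Gs A (herm Gs Js T))))"
proof -
  have R: "is_MP Is Hs R (pinv Is Hs R)" and T: "is_MP Gs Js T (pinv Gs Js T)"
    using pinv_is_MP assms(1,3) by blast+
  have PA: "ein Is Is Js (ein Is Hs Is R (pinv Is Hs R)) A = A"
    using R unfolding assms(4) is_MP_def by (simp add: ein_assoc)
  have AQ: "ein Is Js Js A (ein Js Gs Js (pinv Gs Js T) T) = A"
    using T unfolding assms(4) is_MP_def by (simp flip: ein_assoc)
  have ZP: "ein Js Is Is Z (ein Is Hs Is R (pinv Is Hs R)) = Z"
    using R unfolding assms(5) is_MP_def by (simp flip: ein_assoc)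
  have QZ: "ein Js Js Is (ein Js Gs Js (pinv Gs Js T) T) Z = Z"
    using T unfolding assms(5) is_MP_def by (simp add: ein_assoc)
  have "pinv Is Js A = Z \<longleftrightarrow> is_MP Is Js A Z"
    using pinv_is_MP[of Is Js A] pinv_eqI tensor_ein unfolding assms(4) by metis
  then show ?thesis
    using is_MP_iff_reverse_order_conditions[OF assms(1) R assms(3) T PA AQ ZP QZ] by blast
qed

end
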